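(* Let $k \geqslant 2$, $\ell \geqslant 0$, and let $A$ be as defined in the context. Then no string accepted by $A$ contains a factor (two consecutive symbols) of the form $a_i a_j$ with $j > i+1$.
   Context: A 2DFA $(\Sigma, Q, q_0, \delta, F)$: $\Sigma$ is a finite alphabet not containing end-markers $\vdash, \dashv$; $Q$ finite set of states; $q_0 \in Q$ initial; $\delta: Q \times (\Sigma \cup \{\vdash,\dashv\}) \to Q \times \{-1,+1\}$ partial; $F \subseteq Q$ accepting. On input $w = b_1\cdots b_m$ it works on tape $\vdash b_1 \cdots b_m \dashv$, starting at $\vdash$ in $q_0$; if $\delta(q,c)=(r,d)$ it enters $r$ and moves one cell in direction $d$; if undefined it rejects; it accepts if it ever arrives at $\dashv$ in a state of $F$; it may loop. Construction of $A$. Fix $k \geqslant 2$, $\ell \geqslant 0$, $Q^+ = \{1, \ldots, k\}$, $Q^- = \{1', \ldots, \ell'\}$, ordered by $i < j$ and $i' < j'$ iff $i < j$. A pair is $(P,R)$ with $P \subseteq Q^-$, $R \subseteq Q^+$, $|R| = |P|+1$. Writing $P = \{p_1 < \cdots < p_m\}$ and $R = \{r_1 < \cdots < r_{m+1}\}$, the sequence of the pair is the integer sequence $(r_1, -p_1, r_2, -p_2, \ldots, r_m, -p_m, r_{m+1})$, where a primed state $i'$ contributes the integer $i$ (so $-p_j$ for $p_j = i'$ is the integer $-i$). Pairs are ordered by the lexicographic order of their sequences (a proper prefix is smaller). Let $N = \binom{k+\ell}{\ell+1}$ be the number of pairs and enumerate them increasingly as $(P^{(1)},R^{(1)}) < \cdots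 < (P^{(N)},R^{(N)})$, with $P^{(i)} = \{p^{(i)}_1 < \cdots < p^{(i)}_{m_i}\}$ and $R^{(i)} = \{r^{(i)}_1 < \cdots < r^{(i)}_{m_i+1}\}$; in particular $(P^{(1)},R^{(1)}) = (\emptyset,\{1\})$ and $(P^{(N)},R^{(N)}) = (\emptyset,\{k\})$. The 2DFA $A$ has alphabet $\Sigma = \{a_1, \ldots, a_{N-1}\}$ (distinct symbols), states $Q = Q^+ \cup Q^-$, initial state $q_0 = 1$, accepting states $F = \{k\}$, and exactly the following transitions: $\delta(1, \vdash) = (r^{(1)}_1, +1)$; and for each $i \in \{1,\ldots,N-1\}$: $\delta(r^{(i)}_j, a_i) = (p^{(i)}_j, -1)$ for $j = 1, \ldots, m_i$; $\delta(r^{(i)}_{m_i+1}, a_i) = (r^{(i+1)}_1, +1)$; $\delta(p^{(i+1)}_j, a_i) = (r^{(i+1)}_{j+1}, +1)$ for $j = 1, \ldots, m_{i+1}$. No transitions are defined at $\dashv$. *)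

theory Defs
  imports Main "HOL-Library.List_Lexorder"
begin

text \<open>Lists of integers are ordered lexicographically (List_Lexorder): a proper prefix is smaller.\<close>

fun ilv :: "int list \<Rightarrow> int list \<Rightarrow> int list" where
  "ilv [] ps = []"
| "ilv (r # rs) [] = [r]"
| "ilv (r # rs) (p # ps) = r # p # ilv rs ps"

text \<open>Sequence of a pair (P,R): P a set of primed states (given by their indices), R of unprimed states.\<close>
definition pair_seq :: "nat set \<Rightarrow> nat set \<Rightarrow> int list" where
  "pair_seq P R = ilv (map int (sorted_list_of_set R)) (map (\<lambda>p. - int p) (sorted_list_of_set P))"

definition is_pair :: "nat \<Rightarrow> nat \<Rightarrow> nat set \<Rightarrow> nat set \<Rightarrow> bool" where
  "is_pair k l P R \<longleftrightarrow> P \<subseteq> {1..l} \<and> R \<subseteq> {1..k} \<and> card R = card P + 1"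

definition pair_seqs :: "nat \<Rightarrow> nat \<Rightarrow> int list set" where
  "pair_seqs k l = {pair_seq P R | P R. is_pair k l P R}"

definition sorted_pairs :: "nat \<Rightarrow> nat \<Rightarrow> int list list" where
  "sorted_pairs k l = sorted_list_of_set (pair_seqs k l)"

definition Npairs :: "nat \<Rightarrow> nat \<Rightarrow> nat" where
  "Npairs k l = card {(P, R). is_pair k l P R}"

definition seqn :: "nat \<Rightarrow> nat \<Rightarrow> nat \<Rightarrow> int list" where
  "seqn k l i = sorted_pairs k l ! (i - 1)"

text \<open>m_i = |P^(i)|, r^(i)_j and p^(i)_j (j 1-indexed), read off the sequence.\<close>
definition mi :: "nat \<Rightarrow> nat \<Rightarrow> nat \<Rightarrow> nat" where
  "mi k l i = length (seqn k l i) div 2"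

definition rr :: "nat \<Rightarrow> nat \<Rightarrow> nat \<Rightarrow> nat \<Rightarrow> nat" where
  "rr k l i j = nat (seqn k l i ! (2 * (j - 1)))"

definition pp :: "nat \<Rightarrow> nat \<Rightarrow> nat \<Rightarrow> nat \<Rightarrow> nat" where
  "pp k l i j = nat (- (seqn k l i ! (2 * j - 1)))"

text \<open>States: Pos i is i in Q^+, Neg i is i' in Q^-.\<close>
datatype state = Pos nat | Neg nat

datatype tsym = LEnd | REnd | Sym nat

text \<open>The transition table of A as a relation: delta k l q c (r, d) means delta(q,c) = (r,d).\<close>
definition delta :: "nat \<Rightarrow> nat \<Rightarrow> state \<Rightarrow> tsym \<Rightarrow> state \<times> int \<Rightarrow> bool" where
  "delta k l q c t \<longleftrightarrow>
     (q = Pos 1 \<and> c = LEnd \<and> t = (Pos (rr k l 1 1), 1))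
   \<or> (\<exists>i \<in> {1..Npairs k l - 1}. c = Sym i \<and>
        ((\<exists>j \<in> {1..mi k l i}. q = Pos (rr k l i j) \<and> t = (Neg (pp k l i j), -1))
         \<or> (q = Pos (rr k l i (mi k l i + 1)) \<and> t = (Pos (rr k l (i + 1) 1), 1))
         \<or> (\<exists>j \<in> {1..mi k l (i + 1)}. q = Neg (pp k l (i + 1) j) \<and> t = (Pos (rr k l (i + 1) (j + 1)), 1))))"

definition tape :: "nat list \<Rightarrow> int \<Rightarrow> tsym" where
  "tape w p = (if p = 0 then LEnd else if p = int (length w) + 1 then REnd else Sym (w ! nat (p - 1)))"

definition step :: "nat \<Rightarrow> nat \<Rightarrow> nat list \<Rightarrow> state \<times> int \<Rightarrow> state \<times> int \<Rightarrow> bool" where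
  "step k l w c c' \<longleftrightarrow> (case c of (q, p) \<Rightarrow> case c' of (q', p') \<Rightarrow>
      0 \<le> p \<and> p \<le> int (length w) + 1 \<and> (\<exists>d. delta k l q (tape w p) (q', d) \<and> p' = p + d))"

definition accepts :: "nat \<Rightarrow> nat \<Rightarrow> nat list \<Rightarrow> bool" where
  "accepts k l w \<longleftrightarrow> set w \<subseteq> {1..Npairs k l - 1} \<and>
     (step k l w)\<^sup>*\<^sup>* (Pos 1, 0) (Pos k, int (length w) + 1)"

end

theory Submission
  imports Defs
begin

text \<open>Suppose the factor \<open>a\<^sub>s a\<^sub>t\<close> with \<open>t > s + 1\<close> occupies the tape cells \<open>x\<close> and \<open>x + 1\<close>.
  The automaton moves from \<open>x\<close> to \<open>x + 1\<close> only in the states \<open>r^(s+1)_j\<close> and back only in the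
  states \<open>p^(t)_j\<close>; it can continue at \<open>x + 1\<close> only in the states \<open>r^(t)_j\<close>, and at \<open>x\<close> in a
  primed state only in the states \<open>p^(s+1)_j\<close>. Hence the states visited at the border spell out
  the sequences of the pairs \<open>s + 1\<close> and \<open>t\<close> simultaneously, and the automaton blocks at the
  first index where the two sequences differ or where the first one ends: as the positive entries
  of a sequence increase and its negative entries decrease, the offending state occurs nowhere in
  the other sequence at an index of the same parity. Since pair \<open>s + 1\<close> precedes pair \<open>t\<close>, the
  sequence of \<open>t\<close> is not a prefix of that of \<open>s + 1\<close>, so the head never reaches \<open>x + 2\<close>, let
  alone the right end-marker.\<close>

lemma length_ilv:
  "length rs = Suc (length ps) \<Longrightarrow> length (ilv rs ps) = Suc (2 * length ps)"
  by (induction rs ps rule: ilv.induct) auto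

lemma nth_ilv_even:
  "length rs = Suc (length ps) \<Longrightarrow> u < length rs \<Longrightarrow> ilv rs ps ! (2 * u) = rs ! u"
  by (induction rs ps arbitrary: u rule: ilv.induct) (auto simp: nth_Cons split: nat.split)

lemma nth_ilv_odd:
  "length rs = Suc (length ps) \<Longrightarrow> u < length ps \<Longrightarrow> ilv rs ps ! Suc (2 * u) = ps ! u"
  by (induction rs ps arbitrary: u rule: ilv.induct) (auto simp: nth_Cons split: nat.split)

lemma set_ilv:
  "length rs = Suc (length ps) \<Longrightarrow> set (ilv rs ps) = set rs \<union> set ps"
  by (induction rs ps rule: ilv.induct) auto

definition pair_shaped :: "int list \<Rightarrow> bool" where
  "pair_shaped L \<longleftrightarrow> odd (length L)
     \<and> (\<forall>e < length L. if even e then 0 < L ! e else L ! e < 0)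
     \<and> (\<forall>e e'. e < e' \<longrightarrow> e' < length L \<longrightarrow> even e \<longrightarrow> even e' \<longrightarrow> L ! e < L ! e')
     \<and> (\<forall>e e'. e < e' \<longrightarrow> e' < length L \<longrightarrow> odd e \<longrightarrow> odd e' \<longrightarrow> L ! e' < L ! e)"

context
  fixes L :: "int list"
  assumes shaped: "pair_shaped L"
begin

lemma pair_shaped_odd_length: "odd (length L)"
  using shaped unfolding pair_shaped_def by blast

lemma pair_shaped_even_pos: "even e \<Longrightarrow> e < length L \<Longrightarrow> 0 < L ! e"
  using shaped unfolding pair_shaped_def by auto

lemma pair_shaped_odd_neg: "odd e \<Longrightarrow> e < length L \<Longrightarrow> L ! e < 0"
  using shaped unfolding pair_shaped_def by auto

lemma pair_shaped_even_mono:
  "e < e' \<Longrightarrow> e' < length L \<Longrightarrow> even e \<Longrightarrow> even e' \<Longrightarrow> L ! e < L ! e'"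
  using shaped unfolding pair_shaped_def by blast

lemma pair_shaped_odd_antimono:
  "e < e' \<Longrightarrow> e' < length L \<Longrightarrow> odd e \<Longrightarrow> odd e' \<Longrightarrow> L ! e' < L ! e"
  using shaped unfolding pair_shaped_def by blast

lemma pair_shaped_even_inj:
  "even e \<Longrightarrow> even e' \<Longrightarrow> e < length L \<Longrightarrow> e' < length L \<Longrightarrow> L ! e = L ! e' \<Longrightarrow> e = e'"
  using pair_shaped_even_mono by (metis less_irrefl linorder_neqE_nat)

lemma pair_shaped_odd_inj:
  "odd e \<Longrightarrow> odd e' \<Longrightarrow> e < length L \<Longrightarrow> e' < length L \<Longrightarrow> L ! e = L ! e' \<Longrightarrow> e = e'"
  using pair_shaped_odd_antimono by (metis less_irrefl linorder_neqE_nat)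

end

lemma ilv_pair_shaped:
  fixes rs ps :: "int list"
  assumes len: "length rs = Suc (length ps)"
    and sorted: "sorted_wrt (<) rs" "sorted_wrt (>) ps"
    and signs: "\<forall>r \<in> set rs. 0 < r" "\<forall>p \<in> set ps. p < 0"
  shows "pair_shaped (ilv rs ps)"
proof -
  have len_ilv: "length (ilv rs ps) = Suc (2 * length ps)"
    using length_ilv[OF len] .
  have even_nth: "ilv rs ps ! e = rs ! (e div 2)" "e div 2 < length rs"
    if "even e" "e < length (ilv rs ps)" for e
    using that nth_ilv_even[OF len, of "e div 2"] len len_ilv by auto
  have odd_nth: "ilv rs ps ! e = ps ! (e div 2)" "e div 2 < length ps"
    if "odd e" "e < length (ilv rs ps)" for e
  proof -
    obtain u where u: "e = Suc (2 * u)"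
      using \<open>odd e\<close> by (auto elim: oddE)
    then show "ilv rs ps ! e = ps ! (e div 2)" "e div 2 < length ps"
      using that nth_ilv_odd[OF len, of u] len_ilv by simp_all
  qed
  show ?thesis
    unfolding pair_shaped_def
  proof (intro conjI allI impI)
    show "odd (length (ilv rs ps))"
      using len_ilv by simp
  next
    fix e assume e: "e < length (ilv rs ps)"
    show "if even e then 0 < ilv rs ps ! e else ilv rs ps ! e < 0"
    proof (cases "even e")
      case True
      then have "rs ! (e div 2) \<in> set rs"
        using even_nth(2)[OF True e] by simp
      then show ?thesis
        using True even_nth(1)[OF True e] signs(1) by simp
    next
      case False
      then have "ps ! (e div 2) \<in> set ps"
        using odd_nth(2)[OF False e] by simp
      then show ?thesis
        using False odd_nth(1)[OF False e] signs(2) by simp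
    qed
  next
    fix e e' assume e: "e < e'" "e' < length (ilv rs ps)" "even e" "even e'"
    then have "e div 2 < e' div 2"
      by (auto elim!: evenE)
    then have "rs ! (e div 2) < rs ! (e' div 2)"
      using sorted_wrt_nth_less[OF sorted(1)] even_nth(2)[OF e(4,2)] by blast
    then show "ilv rs ps ! e < ilv rs ps ! e'"
      using e even_nth(1)[OF e(3)] even_nth(1)[OF e(4,2)] by simp
  next
    fix e e' assume e: "e < e'" "e' < length (ilv rs ps)" "odd e" "odd e'"
    then have "e div 2 < e' div 2"
      by (auto elim!: oddE)
    then have "ps ! (e' div 2) < ps ! (e div 2)"
      using sorted_wrt_nth_less[OF sorted(2)] odd_nth(2)[OF e(4,2)] by blast
    then show "ilv rs ps ! e' < ilv rs ps ! e"
      using e odd_nth(1)[OF e(3)] odd_nth(1)[OF e(4,2)] by simp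
  qed
qed

lemma finite_is_pair: "is_pair k l P R \<Longrightarrow> finite P \<and> finite R"
  unfolding is_pair_def by (auto intro: finite_subset)

lemma pair_seq_pair_shaped:
  assumes "is_pair k l P R"
  shows "pair_shaped (pair_seq P R)"
proof -
  have fin: "finite P" "finite R"
    using finite_is_pair[OF assms] by auto
  have "\<forall>p \<in> P. 0 < p" "\<forall>r \<in> R. 0 < r" "card R = Suc (card P)"
    using assms unfolding is_pair_def by auto
  moreover have "sorted_wrt (<) (map int (sorted_list_of_set R))"
    "sorted_wrt (>) (map (\<lambda>p. - int p) (sorted_list_of_set P))"
    by (simp_all add: sorted_wrt_map)
  ultimately show ?thesis
    unfolding pair_seq_def by (intro ilv_pair_shaped) (auto simp: fin)
qed

lemma set_pair_seq:
  assumes "is_pair k l P R"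
  shows "set (pair_seq P R) = int ` R \<union> (\<lambda>p. - int p) ` P"
proof -
  have fin: "finite P" "finite R"
    using finite_is_pair[OF assms] by auto
  have "card R = Suc (card P)"
    using assms unfolding is_pair_def by auto
  then show ?thesis
    unfolding pair_seq_def by (subst set_ilv) (simp_all add: fin)
qed

lemma neg_int_eq_int: "(- int m = int n) \<longleftrightarrow> m = 0 \<and> n = 0" "(int n = - int m) \<longleftrightarrow> m = 0 \<and> n = 0"
  by linarith+

lemma pair_seq_determines_pair:
  assumes "is_pair k l P R"
  shows "R = {n. int n \<in> set (pair_seq P R)}" "P = {n. - int n \<in> set (pair_seq P R)}"
proof -
  have "0 \<notin> P" "0 \<notin> R"
    using assms unfolding is_pair_def by auto
  then show "R = {n. int n \<in> set (pair_seq P R)}" "P = {n. - int n \<in> set (pair_seq P R)}"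
    unfolding set_pair_seq[OF assms] by (auto simp: image_iff neg_int_eq_int)
qed

lemma inj_on_pair_seq: "inj_on (\<lambda>(P, R). pair_seq P R) {(P, R). is_pair k l P R}"
  by (rule inj_onI, clarify) (metis pair_seq_determines_pair)

lemma finite_pairs: "finite {(P, R). is_pair k l P R}"
  by (rule finite_subset[of _ "Pow {1..l} \<times> Pow {1..k}"]) (auto simp: is_pair_def)

lemma pair_seqs_eq_image: "pair_seqs k l = (\<lambda>(P, R). pair_seq P R) ` {(P, R). is_pair k l P R}"
  unfolding pair_seqs_def by auto

lemma finite_pair_seqs: "finite (pair_seqs k l)"
  unfolding pair_seqs_eq_image using finite_pairs by blast

lemma length_sorted_pairs: "length (sorted_pairs k l) = Npairs k l"
  unfolding sorted_pairs_def Npairs_def pair_seqs_eq_image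
  using finite_pairs card_image[OF inj_on_pair_seq] by simp

lemma seqn_pair_shaped:
  assumes "1 \<le> s" "s \<le> Npairs k l"
  shows "pair_shaped (seqn k l s)"
proof -
  have "seqn k l s \<in> set (sorted_pairs k l)"
    unfolding seqn_def using assms length_sorted_pairs by simp
  then have "seqn k l s \<in> pair_seqs k l"
    unfolding sorted_pairs_def using finite_pair_seqs by simp
  then show ?thesis
    unfolding pair_seqs_def using pair_seq_pair_shaped by auto
qed

lemma seqn_strict_mono:
  assumes "1 \<le> s" "s < t" "t \<le> Npairs k l"
  shows "seqn k l s < seqn k l t"
proof -
  have "sorted_wrt (<) (sorted_pairs k l)"
    unfolding sorted_pairs_def by simp
  then show ?thesis
    unfolding seqn_def using assms length_sorted_pairs
    by (simp add: sorted_wrt_nth_less)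
qed

lemma less_list_not_prefix:
  fixes xs ys :: "'a::linorder list"
  assumes "xs < ys"
  shows "take (length ys) xs \<noteq> ys"
proof
  assume prefix: "take (length ys) xs = ys"
  have "ys \<le> xs"
  proof (cases "length ys < length xs")
    case True
    then show ?thesis
      using prefix unfolding list_le_def list_less_def lexord_take_index_conv by auto
  next
    case False
    then show ?thesis
      using prefix by simp
  qed
  then show False
    using assms by simp
qed

lemma less_list_nth_le:
  fixes xs ys :: "'a::linorder list"
  assumes "xs < ys" "take n xs = take n ys" "n < length xs" "n < length ys"
  shows "xs ! n \<le> ys ! n"
proof (rule ccontr)
  assume "\<not> xs ! n \<le> ys ! n"
  then have "ys < xs"
    using assms(2-4) unfolding list_less_def lexord_take_index_conv by auto
  then show False
    using assms(1) by simp
qed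

lemma pair_shaped_diverge_even:
  assumes A: "pair_shaped A" and B: "pair_shaped B"
    and "even e" "e < length A" "take e A = take e B" "A ! e < B ! e"
    and "even e'" "e' < length B"
  shows "B ! e' \<noteq> A ! e"
proof (cases "e' < e")
  case True
  then have "B ! e' = A ! e'"
    using assms(5) by (metis nth_take)
  also have "\<dots> < A ! e"
    using pair_shaped_even_mono[OF A True] assms by simp
  finally show ?thesis by simp
next
  case False
  then have "B ! e \<le> B ! e'"
    using pair_shaped_even_mono[OF B, of e e'] assms by (cases "e = e'") auto
  then show ?thesis
    using assms(6) by simp
qed

lemma pair_shaped_diverge_odd:
  assumes A: "pair_shaped A" and B: "pair_shaped B"
    and "odd e" "e < length B" "take e A = take e B" "e < length A \<longrightarrow> A ! e < B ! e"
    and "odd e'" "e' < length A"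
  shows "A ! e' \<noteq> B ! e"
proof (cases "e' < e")
  case True
  then have "A ! e' = B ! e'"
    using assms(5) by (metis nth_take)
  also have "\<dots> > B ! e"
    using pair_shaped_odd_antimono[OF B True] assms by simp
  finally show ?thesis by simp
next
  case False
  then have "A ! e' \<le> A ! e"
    using pair_shaped_odd_antimono[OF A, of e e'] assms by (cases "e = e'") auto
  then show ?thesis
    using assms(6,8) False by simp
qed

lemma delta_Sym_range: "delta k l q (Sym s) t \<Longrightarrow> 1 \<le> s \<and> Suc s \<le> Npairs k l"
  unfolding delta_def by auto

lemma delta_direction:
  "delta k l q c (q', d) \<Longrightarrow> (d = 1 \<and> (\<exists>r. q' = Pos r)) \<or> (d = -1 \<and> (\<exists>m. q' = Neg m))"
  unfolding delta_def by auto

lemma length_seqn: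
  assumes "1 \<le> s" "s \<le> Npairs k l"
  shows "length (seqn k l s) = Suc (2 * mi k l s)"
proof -
  have "odd (length (seqn k l s))"
    using assms by (intro pair_shaped_odd_length seqn_pair_shaped)
  then show ?thesis
    unfolding mi_def by presburger
qed

lemma delta_Pos_Sym:
  assumes "delta k l (Pos r) (Sym s) (q', d)"
  obtains (left) e where "even e" "Suc e < length (seqn k l s)" "r = nat (seqn k l s ! e)"
      "q' = Neg (nat (- (seqn k l s ! Suc e)))" "d = -1"
    | (right) e where "even e" "Suc e = length (seqn k l s)" "r = nat (seqn k l s ! e)"
      "q' = Pos (nat (seqn k l (Suc s) ! 0))" "d = 1"
proof -
  have len: "length (seqn k l s) = Suc (2 * mi k l s)"
    using delta_Sym_range[OF assms] by (intro length_seqn) auto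
  from assms consider
      (neg) j where "j \<in> {1..mi k l s}" "r = rr k l s j" "q' = Neg (pp k l s j)" "d = -1"
    | (pos) "r = rr k l s (Suc (mi k l s))" "q' = Pos (rr k l (Suc s) 1)" "d = 1"
    unfolding delta_def by auto
  then show thesis
  proof cases
    case neg
    then have "Suc (2 * (j - 1)) = 2 * j - 1"
      by auto
    with neg show ?thesis
      using len by (intro left[of "2 * (j - 1)"]) (auto simp: rr_def pp_def)
  next
    case pos
    then show ?thesis
      using len by (intro right[of "2 * mi k l s"]) (auto simp: rr_def)
  qed
qed

lemma delta_Neg_Sym:
  assumes "delta k l (Neg m) (Sym s) (q', d)"
  obtains e where "odd e" "Suc e < length (seqn k l (Suc s))"
    "m = nat (- (seqn k l (Suc s) ! e))" "q' = Pos (nat (seqn k l (Suc s) ! Suc e))" "d = 1"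
proof -
  have len: "length (seqn k l (Suc s)) = Suc (2 * mi k l (Suc s))"
    using delta_Sym_range[OF assms] by (intro length_seqn) auto
  from assms obtain j where j: "j \<in> {1..mi k l (Suc s)}" "m = pp k l (Suc s) j"
    "q' = Pos (rr k l (Suc s) (Suc j))" "d = 1"
    unfolding delta_def by auto
  then have "Suc (2 * j - 1) = 2 * j"
    by auto
  with j show thesis
    using len by (intro that[of "2 * j - 1"]) (auto simp: rr_def pp_def)
qed

lemma step_delta: "step k l w (q, p) (q', p') \<Longrightarrow> delta k l q (tape w p) (q', p' - p)"
  unfolding step_def by auto

locale jump_factor =
  fixes k l :: nat and w :: "nat list" and i :: nat
  assumes alphabet: "set w \<subseteq> {1..Npairs k l - 1}"
    and factor: "Suc i < length w"
    and jump: "Suc (w ! i) < w ! Suc i"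
begin

definition A :: "int list" where "A = seqn k l (Suc (w ! i))"

definition B :: "int list" where "B = seqn k l (w ! Suc i)"

definition mid :: int where "mid = int i + 1"

definition stuck :: "state \<times> int \<Rightarrow> bool" where
  "stuck c \<longleftrightarrow> (\<forall>c'. \<not> step k l w c c')"

definition agrees_upto :: "nat \<Rightarrow> bool" where
  "agrees_upto e \<longleftrightarrow> e < length A \<and> take (Suc e) A = take (Suc e) B"

definition safe :: "state \<Rightarrow> int \<Rightarrow> bool" where
  "safe q p \<longleftrightarrow> p \<le> mid + 1
     \<and> (p = mid + 1 \<longrightarrow> stuck (q, p) \<or> (\<exists>e. even e \<and> agrees_upto e \<and> q = Pos (nat (A ! e))))
     \<and> (\<forall>m. p = mid \<and> q = Neg m \<longrightarrow> stuck (q, p) \<or> (\<exists>e. odd e \<and> agrees_upto e \<and> m = nat (- (A ! e))))"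

lemma letters_in_range: "1 \<le> w ! i" "Suc (w ! Suc i) \<le> Npairs k l"
proof -
  have "w ! i \<in> set w" "w ! Suc i \<in> set w"
    using factor by simp_all
  then show "1 \<le> w ! i" "Suc (w ! Suc i) \<le> Npairs k l"
    using alphabet by fastforce+
qed

lemma A_pair_shaped: "pair_shaped A"
  unfolding A_def using letters_in_range jump by (intro seqn_pair_shaped) auto

lemma B_pair_shaped: "pair_shaped B"
  unfolding B_def using letters_in_range jump by (intro seqn_pair_shaped) auto

lemma A_less_B: "A < B"
  unfolding A_def B_def using letters_in_range jump by (intro seqn_strict_mono) auto

lemma tape_mid: "tape w mid = Sym (w ! i)"
  unfolding tape_def mid_def using factor by auto

lemma tape_mid_Suc: "tape w (mid + 1) = Sym (w ! Suc i)"
  unfolding tape_def mid_def using factor by (auto simp: nat_add_distrib)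

lemma mismatch_stuck_right:
  assumes "even e" "e < length A" "take e A = take e B" "A ! e < B ! e"
  shows "stuck (Pos (nat (A ! e)), mid + 1)"
  unfolding stuck_def
proof (intro allI notI)
  fix c' assume "step k l w (Pos (nat (A ! e)), mid + 1) c'"
  then obtain q' d where "delta k l (Pos (nat (A ! e))) (Sym (w ! Suc i)) (q', d)"
    using step_delta tape_mid_Suc by (metis surj_pair)
  then obtain e' where e': "even e'" "e' < length B" "nat (A ! e) = nat (B ! e')"
    by (cases rule: delta_Pos_Sym) (auto simp flip: B_def)
  have "0 < A ! e" "0 < B ! e'"
    using assms e' A_pair_shaped B_pair_shaped pair_shaped_even_pos by auto
  then have "B ! e' = A ! e"
    using e'(3) by simp
  then show False
    using pair_shaped_diverge_even[OF A_pair_shaped B_pair_shaped assms e'(1,2)] by simp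
qed

lemma mismatch_stuck_left:
  assumes "odd e" "e < length B" "take e A = take e B" "e < length A \<longrightarrow> A ! e < B ! e"
  shows "stuck (Neg (nat (- (B ! e))), mid)"
  unfolding stuck_def
proof (intro allI notI)
  fix c' assume "step k l w (Neg (nat (- (B ! e))), mid) c'"
  then obtain q' d where "delta k l (Neg (nat (- (B ! e)))) (Sym (w ! i)) (q', d)"
    using step_delta tape_mid by (metis surj_pair)
  then obtain e' where e': "odd e'" "e' < length A" "nat (- (B ! e)) = nat (- (A ! e'))"
    by (cases rule: delta_Neg_Sym) (auto simp flip: A_def)
  have "A ! e' < 0" "B ! e < 0"
    using assms e' A_pair_shaped B_pair_shaped pair_shaped_odd_neg by auto
  then have "A ! e' = B ! e"
    using e'(3) by simp
  then show False
    using pair_shaped_diverge_odd[OF A_pair_shaped B_pair_shaped assms e'(1,2)] by simp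
qed

lemma enter_right:
  assumes "even e" "e < length A" "take e A = take e B"
  shows "stuck (Pos (nat (A ! e)), mid + 1) \<or> agrees_upto e"
proof -
  have "e < length B"
  proof (rule ccontr)
    assume "\<not> e < length B"
    then have "take (length B) A = B"
      using assms(3) by (metis min_absorb1 not_le_imp_less order_less_imp_le take_all take_take)
    then show False
      using less_list_not_prefix[OF A_less_B] by simp
  qed
  then have "A ! e \<le> B ! e"
    using less_list_nth_le[OF A_less_B assms(3,2)] by simp
  then consider "A ! e = B ! e" | "A ! e < B ! e"
    by linarith
  then show ?thesis
  proof cases
    case 1
    then have "agrees_upto e"
      unfolding agrees_upto_def using assms \<open>e < length B\<close> by (simp add: take_Suc_conv_app_nth)
    then show ?thesis ..
  next
    case 2
    then show ?thesis
      using mismatch_stuck_right assms by blast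
  qed
qed

lemma enter_left:
  assumes "odd e" "e < length B" "take e A = take e B"
  shows "stuck (Neg (nat (- (B ! e))), mid) \<or> agrees_upto e \<and> A ! e = B ! e"
proof (cases "e < length A \<and> A ! e = B ! e")
  case True
  then show ?thesis
    unfolding agrees_upto_def using assms by (simp add: take_Suc_conv_app_nth)
next
  case False
  then have "e < length A \<longrightarrow> A ! e < B ! e"
    using less_list_nth_le[OF A_less_B assms(3)] assms(2) by fastforce
  then show ?thesis
    using mismatch_stuck_left assms by blast
qed

lemma cross_right:
  assumes "safe q mid" "step k l w (q, mid) (q', mid + 1)"
  obtains e where "even e" "e < length A" "take e A = take e B" "q' = Pos (nat (A ! e))"
proof (cases q)
  case (Pos r)
  from assms(2) have "delta k l (Pos r) (Sym (w ! i)) (q', 1)"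
    using step_delta tape_mid Pos by fastforce
  then have "q' = Pos (nat (A ! 0))"
    by (cases rule: delta_Pos_Sym) (auto simp flip: A_def)
  moreover have "0 < length A"
    using pair_shaped_odd_length[OF A_pair_shaped] by (cases A) auto
  ultimately show thesis
    using that[of 0] by simp
next
  case (Neg m)
  then have "\<not> stuck (q, mid)"
    using assms(2) unfolding stuck_def by blast
  then obtain e where e: "odd e" "agrees_upto e" "m = nat (- (A ! e))"
    using assms(1) Neg unfolding safe_def by blast
  from assms(2) have "delta k l (Neg m) (Sym (w ! i)) (q', 1)"
    using step_delta tape_mid Neg by fastforce
  then obtain e' where e': "odd e'" "Suc e' < length A"
    "m = nat (- (A ! e'))" "q' = Pos (nat (A ! Suc e'))"
    by (cases rule: delta_Neg_Sym) (auto simp flip: A_def)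
  have "e < length A" "take (Suc e) A = take (Suc e) B"
    using e(2) unfolding agrees_upto_def by simp_all
  moreover have "A ! e < 0" "A ! e' < 0"
    using pair_shaped_odd_neg[OF A_pair_shaped] e(1) e'(1,2) \<open>e < length A\<close> by simp_all
  then have "e' = e"
    using e e' \<open>e < length A\<close> by (intro pair_shaped_odd_inj[OF A_pair_shaped]) simp_all
  ultimately show thesis
    using that[of "Suc e"] e(1) e'(2,4) by simp
qed

lemma cross_left:
  assumes "even e" "agrees_upto e" "step k l w (Pos (nat (A ! e)), mid + 1) (q', p')"
  shows "p' = mid" "Suc e < length B" "q' = Neg (nat (- (B ! Suc e)))"
proof -
  have prefix: "take (Suc e) A = take (Suc e) B" and "e < length A"
    using assms(2) unfolding agrees_upto_def by auto
  then have "e < length B" "A ! e = B ! e"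
    by (metis length_take min_less_iff_conj lessI, metis lessI nth_take)
  have "delta k l (Pos (nat (A ! e))) (Sym (w ! Suc i)) (q', p' - (mid + 1))"
    using step_delta[OF assms(3)] tape_mid_Suc by simp
  then obtain e' where e': "even e'" "e' < length B" "nat (A ! e) = nat (B ! e')"
    and next_state: "Suc e' < length B \<and> q' = Neg (nat (- (B ! Suc e'))) \<and> p' = mid
      \<or> Suc e' = length B"
    by (cases rule: delta_Pos_Sym) (auto simp flip: B_def)
  have "0 < B ! e" "0 < B ! e'"
    using assms(1) e' \<open>e < length B\<close> B_pair_shaped pair_shaped_even_pos by auto
  then have "e' = e"
    using e' \<open>A ! e = B ! e\<close> assms(1) \<open>e < length B\<close>
    by (intro pair_shaped_even_inj[OF B_pair_shaped]) simp_all
  moreover have "Suc e \<noteq> length B"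
    using prefix less_list_not_prefix[OF A_less_B] by fastforce
  ultimately show "p' = mid" "Suc e < length B" "q' = Neg (nat (- (B ! Suc e)))"
    using next_state by auto
qed

lemma safe_step:
  assumes "safe q p" "step k l w (q, p) (q', p')"
  shows "safe q' p'"
proof -
  have move: "(p' = p + 1 \<and> (\<exists>r. q' = Pos r)) \<or> (p' = p - 1 \<and> (\<exists>m. q' = Neg m))"
    using delta_direction[OF step_delta[OF assms(2)]] by auto
  have "p \<le> mid + 1"
    using assms(1) unfolding safe_def by simp
  then consider "p' < mid" | "p < mid" "p' = mid" | "p = mid" "p' = mid + 1" | "p = mid + 1"
    using move by linarith
  then show ?thesis
  proof cases
    case 1
    then show ?thesis
      unfolding safe_def by auto
  next
    case 2
    then have "\<exists>r. q' = Pos r"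
      using move by auto
    then show ?thesis
      unfolding safe_def using 2 by auto
  next
    case 3
    then obtain e where "even e" "e < length A" "take e A = take e B" "q' = Pos (nat (A ! e))"
      using cross_right assms by blast
    then show ?thesis
      using enter_right 3 unfolding safe_def by auto
  next
    case 4
    then have "\<not> stuck (q, p)"
      using assms(2) unfolding stuck_def by blast
    then obtain e where e: "even e" "agrees_upto e" "q = Pos (nat (A ! e))"
      using assms(1) 4 unfolding safe_def by blast
    then have "p' = mid" "Suc e < length B" "q' = Neg (nat (- (B ! Suc e)))"
      using cross_left assms(2) 4 by auto
    moreover have "take (Suc e) A = take (Suc e) B"
      using e(2) unfolding agrees_upto_def by simp
    ultimately have "stuck (q', mid) \<or> agrees_upto (Suc e) \<and> A ! Suc e = B ! Suc e"
      using enter_left[of "Suc e"] e(1) by simp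
    then show ?thesis
    proof
      assume "stuck (q', mid)"
      then show ?thesis
        unfolding safe_def using \<open>p' = mid\<close> by auto
    next
      assume "agrees_upto (Suc e) \<and> A ! Suc e = B ! Suc e"
      then show ?thesis
        unfolding safe_def using \<open>p' = mid\<close> \<open>q' = Neg _\<close> e(1)
        by (auto intro!: exI[of _ "Suc e"])
    qed
  qed
qed

lemma reachable_safe: "(step k l w)\<^sup>*\<^sup>* (Pos 1, 0) (q, p) \<Longrightarrow> safe q p"
proof (induction rule: rtranclp_induct2)
  case refl
  then show ?case
    unfolding safe_def mid_def by simp
next
  case (step q p q' p')
  then show ?case
    using safe_step by blast
qed

lemma reachable_position_le: "(step k l w)\<^sup>*\<^sup>* (Pos 1, 0) (q, p) \<Longrightarrow> p \<le> int i + 2"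
  using reachable_safe unfolding safe_def mid_def by fastforce

end

theorem mainTheorem7:
  fixes k l :: nat and w :: "nat list"
  assumes "k \<ge> 2"
    and "accepts k l w"
  shows "\<forall>i. i + 1 < length w \<longrightarrow> \<not> (w ! (i + 1) > w ! i + 1)"
proof (intro allI impI notI)
  fix i
  assume factor: "i + 1 < length w" and jump: "w ! (i + 1) > w ! i + 1"
  then interpret jump_factor k l w i
    using assms(2) unfolding accepts_def by unfold_locales auto
  have "(step k l w)\<^sup>*\<^sup>* (Pos 1, 0) (Pos k, int (length w) + 1)"
    using assms(2) unfolding accepts_def by simp
  then have "int (length w) + 1 \<le> int i + 2"
    by (rule reachable_position_le)
  then show False
    using factor by simp
qed

end
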